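(* For every odd $n>1$, the algebra $\mathbf{A}_n$ does not have a minority term.
   Context: Let $[n]=\{1,\dots,n\}$ and let $m$ be the minority operation on $[n]$ given by $m(x,y,z)=x$ if $y=z$, $m(x,y,z)=y$ if $x=z$, and $m(x,y,z)=z$ otherwise. On $\{0,1,2,3\}$, $+,-$ denote arithmetic modulo 4 and $\oplus$ denotes bitwise XOR of 2-bit binary representations. Let $A_n=[n]\times\{0,1,2,3\}$. For $i\in[n]$ define the ternary operation $t_i$ on $A_n$ by $t_i((a_1,b_1),(a_2,b_2),(a_3,b_3))=(i,\,b_1-b_2+b_3)$ if $a_1=a_2=a_3=i$, and $=(m(a_1,a_2,a_3),\,b_1\oplus b_2\oplus b_3)$ otherwise. The algebra $\mathbf{A}_n$ has universe $A_n$ and basic operations $t_1,\dots,t_n$. A minority term of an algebra is a ternary term whose interpretation satisfies $m(y,x,x)\approx m(x,y,x)\approx m(x,x,y)\approx y$. *)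

theory Defs
  imports Main
begin

definition minority :: "nat \<Rightarrow> nat \<Rightarrow> nat \<Rightarrow> nat" where
  "minority x y z = (if y = z then x else if x = z then y else z)"

definition carrierA :: "nat \<Rightarrow> (nat \<times> int) set" where
  "carrierA n = {1..n} \<times> {0..3}"

definition t_op :: "nat \<Rightarrow> nat \<times> int \<Rightarrow> nat \<times> int \<Rightarrow> nat \<times> int \<Rightarrow> nat \<times> int" where
  "t_op i p1 p2 p3 =
     (if fst p1 = i \<and> fst p2 = i \<and> fst p3 = i
      then (i, (snd p1 - snd p2 + snd p3) mod 4)
      else (minority (fst p1) (fst p2) (fst p3), xor (xor (snd p1) (snd p2)) (snd p3)))"

datatype tterm = VX | VY | VZ | Op nat tterm tterm tterm

fun wf_term :: "nat \<Rightarrow> tterm \<Rightarrow> bool" where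
  "wf_term n VX = True"
| "wf_term n VY = True"
| "wf_term n VZ = True"
| "wf_term n (Op i s t u) = (i \<in> {1..n} \<and> wf_term n s \<and> wf_term n t \<and> wf_term n u)"

fun eval :: "tterm \<Rightarrow> nat \<times> int \<Rightarrow> nat \<times> int \<Rightarrow> nat \<times> int \<Rightarrow> nat \<times> int" where
  "eval VX x y z = x"
| "eval VY x y z = y"
| "eval VZ x y z = z"
| "eval (Op i s t u) x y z = t_op i (eval s x y z) (eval t x y z) (eval u x y z)"

definition is_minority_term :: "nat \<Rightarrow> tterm \<Rightarrow> bool" where
  "is_minority_term n t \<longleftrightarrow> wf_term n t \<and>
     (\<forall>x\<in>carrierA n. \<forall>y\<in>carrierA n.
        eval t y x x = y \<and> eval t x y x = y \<and> eval t x x y = y)"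

end

theory Submission
  imports Defs
begin

text \<open>On the fibre over \<open>a\<close>, \<open>t\<^sub>a\<close> acts as \<open>x - y + z\<close> in \<open>\<int>/4\<close> and every other \<open>t\<^sub>i\<close> as
  \<open>x \<oplus> y \<oplus> z\<close>. Both add the low bits, so evaluating a term at \<open>(a,0), (a,l\<^sub>2), (a,l\<^sub>3)\<close>
  with \<open>l\<^sub>2, l\<^sub>3 \<in> {0,1}\<close> stays in the fibre and gives low bit \<open>c\<^sub>Y l\<^sub>2 + c\<^sub>Z l\<^sub>3\<close>, where \<open>c\<^sub>Y, c\<^sub>Z\<close> are
  the parities of the numbers of occurrences of \<open>Y\<close> and \<open>Z\<close>. The high bits add as well, except
  that \<open>t\<^sub>a\<close> also adds a borrow determined by the low bits. Sum the high bits of the evaluations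
  at \<open>(l\<^sub>2,l\<^sub>3) = (0,1), (1,0), (1,1)\<close> over all fibres: every occurrence of an operation symbol
  contributes its borrows in exactly one fibre, and these borrows measure precisely the failure
  of \<open>c\<^sub>Y c\<^sub>Z\<close> to be additive, so the sum is congruent to \<open>c\<^sub>Y c\<^sub>Z\<close> modulo 2. For a minority term
  all these high bits are \<open>0\<close>, while \<open>c\<^sub>Y = c\<^sub>Z = 1\<close>.\<close>

lemma int_atLeastAtMost_0_3_cases:
  "(b::int) \<in> {0..3} \<Longrightarrow> b = 0 \<or> b = 1 \<or> b = 2 \<or> b = 3"
  by auto

lemma mod_add3_eq:
  fixes a b d c :: "'a::euclidean_semiring_cancel"
  shows "(a mod c + b mod c + d mod c) mod c = (a + b + d) mod c"
  by (metis mod_add_eq mod_add_left_eq)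

lemma mod_linear_combination_eq:
  fixes a b x y c :: "'a::euclidean_semiring_cancel"
  shows "(a mod c * x + b mod c * y) mod c = (a * x + b * y) mod c"
  by (metis mod_add_eq mod_mult_left_eq)

text \<open>\<open>l\<^sub>1 - l\<^sub>2 + l\<^sub>3\<close> leaves \<open>{0,1}\<close> exactly in these two cases, carrying into or borrowing from
  the high bit.\<close>

definition borrow :: "int \<Rightarrow> int \<Rightarrow> int \<Rightarrow> int" where
  "borrow l1 l2 l3 = (if l1 = l3 \<and> l2 \<noteq> l1 then 1 else 0)"

lemma xor3_bits:
  fixes b1 b2 b3 :: int
  assumes "b1 \<in> {0..3}" "b2 \<in> {0..3}" "b3 \<in> {0..3}"
  shows "xor (xor b1 b2) b3 = 2 * ((b1 div 2 + b2 div 2 + b3 div 2) mod 2) + (b1 + b2 + b3) mod 2"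
  using assms[THEN int_atLeastAtMost_0_3_cases] by (elim disjE) simp_all

lemma diff_add_mod_4_bits:
  fixes b1 b2 b3 :: int
  assumes "b1 \<in> {0..3}" "b2 \<in> {0..3}" "b3 \<in> {0..3}"
  shows "(b1 - b2 + b3) mod 4 =
    2 * ((b1 div 2 + b2 div 2 + b3 div 2 + borrow (b1 mod 2) (b2 mod 2) (b3 mod 2)) mod 2)
    + (b1 + b2 + b3) mod 2"
  using assms[THEN int_atLeastAtMost_0_3_cases] by (elim disjE) (simp_all add: borrow_def)

lemma two_bit_number:
  fixes h l :: int
  shows "2 * (h mod 2) + l mod 2 \<in> {0..3}"
    and "(2 * (h mod 2) + l mod 2) mod 2 = l mod 2"
    and "(2 * (h mod 2) + l mod 2) div 2 = h mod 2"
  by auto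

lemma t_op_same_fibre:
  fixes b1 b2 b3 :: int
  assumes "b1 \<in> {0..3}" "b2 \<in> {0..3}" "b3 \<in> {0..3}"
  shows "t_op i (a, b1) (a, b2) (a, b3) =
    (a, 2 * ((b1 div 2 + b2 div 2 + b3 div 2
              + (if a = i then borrow (b1 mod 2) (b2 mod 2) (b3 mod 2) else 0)) mod 2)
        + (b1 + b2 + b3) mod 2)"
  using assms by (simp add: t_op_def minority_def xor3_bits diff_add_mod_4_bits)

fun y_parity :: "tterm \<Rightarrow> int" where
  "y_parity VX = 0"
| "y_parity VY = 1"
| "y_parity VZ = 0"
| "y_parity (Op i s t u) = (y_parity s + y_parity t + y_parity u) mod 2"

fun z_parity :: "tterm \<Rightarrow> int" where
  "z_parity VX = 0"
| "z_parity VY = 0"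
| "z_parity VZ = 1"
| "z_parity (Op i s t u) = (z_parity s + z_parity t + z_parity u) mod 2"

lemma y_parity_01: "y_parity t \<in> {0, 1}"
  by (induction t) auto

lemma z_parity_01: "z_parity t \<in> {0, 1}"
  by (induction t) auto

definition low_bit :: "tterm \<Rightarrow> int \<Rightarrow> int \<Rightarrow> int" where
  "low_bit t l2 l3 = (y_parity t * l2 + z_parity t * l3) mod 2"

lemma low_bit_Op:
  "low_bit (Op i s t u) l2 l3 = (low_bit s l2 l3 + low_bit t l2 l3 + low_bit u l2 l3) mod 2"
proof -
  have "low_bit (Op i s t u) l2 l3 =
    ((y_parity s + y_parity t + y_parity u) * l2 + (z_parity s + z_parity t + z_parity u) * l3) mod 2"
    by (simp only: low_bit_def y_parity.simps z_parity.simps mod_linear_combination_eq)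
  also have "\<dots> = ((y_parity s * l2 + z_parity s * l3) + (y_parity t * l2 + z_parity t * l3)
      + (y_parity u * l2 + z_parity u * l3)) mod 2"
    by (simp add: algebra_simps)
  also have "\<dots> = (low_bit s l2 l3 + low_bit t l2 l3 + low_bit u l2 l3) mod 2"
    unfolding low_bit_def by (rule mod_add3_eq[symmetric])
  finally show ?thesis .
qed

lemma eval_same_fibre:
  assumes "l2 \<in> {0, 1}" "l3 \<in> {0, 1}"
  shows "\<exists>b \<in> {0..3}. eval t (a, 0) (a, l2) (a, l3) = (a, b) \<and> b mod 2 = low_bit t l2 l3"
proof (induction t)
  case (Op i s t u)
  then obtain b1 b2 b3 where b: "b1 \<in> {0..3}" "b2 \<in> {0..3}" "b3 \<in> {0..3}"
    and eval_s: "eval s (a, 0) (a, l2) (a, l3) = (a, b1)" "b1 mod 2 = low_bit s l2 l3"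
    and eval_t: "eval t (a, 0) (a, l2) (a, l3) = (a, b2)" "b2 mod 2 = low_bit t l2 l3"
    and eval_u: "eval u (a, 0) (a, l2) (a, l3) = (a, b3)" "b3 mod 2 = low_bit u l2 l3"
    by blast
  obtain h where h: "t_op i (a, b1) (a, b2) (a, b3) = (a, 2 * (h mod 2) + (b1 + b2 + b3) mod 2)"
    using t_op_same_fibre[OF b] by blast
  have low: "(b1 + b2 + b3) mod 2 = low_bit (Op i s t u) l2 l3"
    using eval_s(2) eval_t(2) eval_u(2) low_bit_Op mod_add3_eq[of b1 2 b2 b3] by simp
  have "eval (Op i s t u) (a, 0) (a, l2) (a, l3) = (a, 2 * (h mod 2) + (b1 + b2 + b3) mod 2)"
    unfolding eval.simps eval_s(1) eval_t(1) eval_u(1) by (rule h)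
  moreover have "(2 * (h mod 2) + (b1 + b2 + b3) mod 2) mod 2 = low_bit (Op i s t u) l2 l3"
    unfolding two_bit_number(2) by (rule low)
  ultimately show ?case
    using two_bit_number(1) by blast
qed (use assms in \<open>auto simp: low_bit_def\<close>)

definition high_bit :: "tterm \<Rightarrow> nat \<Rightarrow> int \<Rightarrow> int \<Rightarrow> int" where
  "high_bit t a l2 l3 = snd (eval t (a, 0) (a, l2) (a, l3)) div 2"

lemma high_bit_Op:
  assumes "l2 \<in> {0, 1}" "l3 \<in> {0, 1}"
  shows "high_bit (Op i s t u) a l2 l3 =
    (high_bit s a l2 l3 + high_bit t a l2 l3 + high_bit u a l2 l3
     + (if a = i then borrow (low_bit s l2 l3) (low_bit t l2 l3) (low_bit u l2 l3) else 0)) mod 2"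
proof -
  obtain b1 b2 b3 where b: "b1 \<in> {0..3}" "b2 \<in> {0..3}" "b3 \<in> {0..3}"
    and eval_s: "eval s (a, 0) (a, l2) (a, l3) = (a, b1)" "b1 mod 2 = low_bit s l2 l3"
    and eval_t: "eval t (a, 0) (a, l2) (a, l3) = (a, b2)" "b2 mod 2 = low_bit t l2 l3"
    and eval_u: "eval u (a, 0) (a, l2) (a, l3) = (a, b3)" "b3 mod 2 = low_bit u l2 l3"
    using eval_same_fibre[OF assms] by meson
  show ?thesis
    unfolding high_bit_def using eval_s eval_t eval_u
    by (simp only: eval.simps t_op_same_fibre[OF b] snd_conv two_bit_number)
qed

definition high_bit_sum :: "tterm \<Rightarrow> nat \<Rightarrow> int" where
  "high_bit_sum t a = high_bit t a 0 1 + high_bit t a 1 0 + high_bit t a 1 1"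

definition borrow_sum :: "tterm \<Rightarrow> tterm \<Rightarrow> tterm \<Rightarrow> int" where
  "borrow_sum s t u =
     borrow (low_bit s 0 1) (low_bit t 0 1) (low_bit u 0 1)
   + borrow (low_bit s 1 0) (low_bit t 1 0) (low_bit u 1 0)
   + borrow (low_bit s 1 1) (low_bit t 1 1) (low_bit u 1 1)"

lemma high_bit_sum_Op:
  "high_bit_sum (Op i s t u) a mod 2 =
    (high_bit_sum s a + high_bit_sum t a + high_bit_sum u a
     + (if a = i then borrow_sum s t u else 0)) mod 2"
proof -
  let ?h = "\<lambda>l2 l3. high_bit s a l2 l3 + high_bit t a l2 l3 + high_bit u a l2 l3
    + (if a = i then borrow (low_bit s l2 l3) (low_bit t l2 l3) (low_bit u l2 l3) else 0)"
  have "high_bit_sum (Op i s t u) a = ?h 0 1 mod 2 + ?h 1 0 mod 2 + ?h 1 1 mod 2"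
    by (simp add: high_bit_sum_def high_bit_Op)
  then have "high_bit_sum (Op i s t u) a mod 2 = (?h 0 1 + ?h 1 0 + ?h 1 1) mod 2"
    by (simp only: mod_add3_eq)
  then show ?thesis
    by (cases "a = i") (simp_all add: high_bit_sum_def borrow_sum_def ac_simps)
qed

lemma borrow_sum_parity:
  "(y_parity s * z_parity s + y_parity t * z_parity t + y_parity u * z_parity u
    + borrow_sum s t u) mod 2 = y_parity (Op i s t u) * z_parity (Op i s t u)"
  using y_parity_01[of s] y_parity_01[of t] y_parity_01[of u]
    z_parity_01[of s] z_parity_01[of t] z_parity_01[of u]
  unfolding borrow_sum_def low_bit_def
  by (elim insertE emptyE) (simp_all add: borrow_def)

lemma high_bit_sum_parity:
  assumes "wf_term n t"
  shows "(\<Sum>a\<in>{1..n}. high_bit_sum t a) mod 2 = y_parity t * z_parity t"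
  using assms
proof (induction t)
  case (Op i s t u)
  let ?S = "\<lambda>r. \<Sum>a\<in>{1..n}. high_bit_sum r a"
  have i: "i \<in> {1..n}" and IH: "?S s mod 2 = y_parity s * z_parity s"
    "?S t mod 2 = y_parity t * z_parity t" "?S u mod 2 = y_parity u * z_parity u"
    using Op by auto
  have "?S (Op i s t u) mod 2 = (\<Sum>a\<in>{1..n}. high_bit_sum (Op i s t u) a mod 2) mod 2"
    by (simp add: mod_sum_eq)
  also have "\<dots> = (\<Sum>a\<in>{1..n}. high_bit_sum s a + high_bit_sum t a + high_bit_sum u a
      + (if a = i then borrow_sum s t u else 0)) mod 2"
    by (simp add: high_bit_sum_Op mod_sum_eq)
  also have "\<dots> = (?S s + ?S t + ?S u + borrow_sum s t u) mod 2"
    using i by (simp add: sum.distrib)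
  also have "\<dots> = ((?S s mod 2 + ?S t mod 2 + ?S u mod 2) mod 2 + borrow_sum s t u) mod 2"
    by (simp add: mod_add3_eq mod_add_left_eq)
  also have "\<dots> = (y_parity s * z_parity s + y_parity t * z_parity t + y_parity u * z_parity u
      + borrow_sum s t u) mod 2"
    unfolding IH by (simp add: mod_add_left_eq)
  also have "\<dots> = y_parity (Op i s t u) * z_parity (Op i s t u)"
    by (rule borrow_sum_parity)
  finally show ?case .
qed (simp_all add: high_bit_sum_def high_bit_def)

lemma minority_term_fibre:
  assumes "is_minority_term n t" and "a \<in> {1..n}"
  shows "eval t (a, 0) (a, 0) (a, 1) = (a, 1)" and "eval t (a, 0) (a, 1) (a, 0) = (a, 1)"
    and "eval t (a, 0) (a, 1) (a, 1) = (a, 0)"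
  using assms by (auto simp: is_minority_term_def carrierA_def)

lemma minority_term_high_bit_sum:
  assumes "is_minority_term n t" and "a \<in> {1..n}"
  shows "high_bit_sum t a = 0"
  using minority_term_fibre[OF assms] by (simp add: high_bit_sum_def high_bit_def)

lemma minority_term_parities:
  assumes "is_minority_term n t" and "a \<in> {1..n}"
  shows "y_parity t = 1" and "z_parity t = 1"
proof -
  have "low_bit t l2 l3 = snd (eval t (a, 0) (a, l2) (a, l3)) mod 2"
    if "l2 \<in> {0, 1}" "l3 \<in> {0, 1}" for l2 l3
    using eval_same_fibre[OF that, of t a] by auto
  then have "low_bit t 1 0 = 1" "low_bit t 0 1 = 1"
    using minority_term_fibre[OF assms] by simp_all
  then show "y_parity t = 1" "z_parity t = 1"
    using y_parity_01[of t] z_parity_01[of t] by (auto simp: low_bit_def)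
qed

lemma no_minority_term:
  assumes "n > 0"
  shows "\<not> is_minority_term n t"
proof
  assume t: "is_minority_term n t"
  have "1 \<in> {1..n}"
    using assms by simp
  then have "y_parity t * z_parity t = 1"
    using minority_term_parities[OF t] by (metis mult_1)
  moreover have "(\<Sum>a\<in>{1..n}. high_bit_sum t a) = 0"
    using minority_term_high_bit_sum[OF t] by simp
  moreover have "wf_term n t"
    using t by (simp add: is_minority_term_def)
  ultimately show False
    using high_bit_sum_parity by fastforce
qed

text \<open>The parity argument does not need \<open>n\<close> to be odd.\<close>

theorem proposition5p4:
  fixes n :: nat
  assumes "odd n" and "n > 1"
  shows "\<not> (\<exists>t. is_minority_term n t)"
  using no_minority_term \<open>n > 1\<close> by simp

end
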